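(* Let $V$ be a finite vocabulary. Each word $x\in V$ has a synonym set $S_x\subseteq V$ with $x\in S_x$, the synonym relation being symmetric, and a nonempty perturbation set $P_x\subseteq V$. Fix $L\ge1$, $0\le R\le L$, a finite label set $\mathcal{Y}$ and a classifier $f:V^L\to\mathcal{Y}$. For $X=x_1,\ldots,x_L\in V^L$ let $S_X=\{X'\in V^L: \sum_i\mathbb{I}\{x'_i\ne x_i\}\le R,\ x'_i\in S_{x_i}\ \forall i\}$, $\Pi_X(Z)=\prod_{i=1}^L\mathbb{I}\{z_i\in P_{x_i}\}/|P_{x_i}|$, $g^{\mathrm{RS}}(X,c)=\mathbb{P}_{Z\sim\Pi_X}(f(Z)=c)$, and, with $\mathcal{H}_{[0,1]}$ the set of all functions $h:V^L\to[0,1]$ and $\Pi_X[h]=\mathbb{E}_{Z\sim\Pi_X}[h(Z)]$, $$g^{\mathrm{RS}}_{low}(X,c)=\min_{h\in\mathcal{H}_{[0,1]}}\min_{X'\in S_X}\{\Pi_{X'}[h]:\Pi_X[h]=g^{\mathrm{RS}}(X,c)\},\quad g^{\mathrm{RS}}_{up}(X,c)=\max_{h\in\mathcal{H}_{[0,1]}}\max_{X'\in S_X}\{\Pi_{X'}[h]:\Pi_X[h]=g^{\mathrm{RS}}(X,c)\}.$$ Assume $|P_x|=|P_{x'}|$ for every word $x$ and every $x'\in S_x$. Let $q_x=\min_{x'\in S_x}|P_x\cap P_{x'}|/|P_x|$, and for a sentence $X$ order its positions $i_1,\ldots,i_L$ so that $q_{x_{i_1}}\le\cdots\le q_{x_{i_L}}$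 and put $q_X=1-\prod_{j=1}^R q_{x_{i_j}}$. Then for all $X$ and $c\in\mathcal{Y}$, $$g^{\mathrm{RS}}_{low}(X,c)\ge\max\big(g^{\mathrm{RS}}(X,c)-q_X,0\big),\qquad g^{\mathrm{RS}}_{up}(X,c)\le\min\big(g^{\mathrm{RS}}(X,c)+q_X,1\big).$$ *)

theory Defs
  imports Complex_Main
begin

definition sentences :: "nat \<Rightarrow> 'w list set" where
  "sentences L = {X. length X = L}"

definition Pi_pmf :: "('w \<Rightarrow> 'w set) \<Rightarrow> 'w list \<Rightarrow> 'w list \<Rightarrow> real" where
  "Pi_pmf P X Z = (\<Prod>i<length X. (if Z ! i \<in> P (X ! i) then 1 else 0) / real (card (P (X ! i))))"

definition Pi_exp :: "('w \<Rightarrow> 'w set) \<Rightarrow> 'w list \<Rightarrow> ('w list \<Rightarrow> real) \<Rightarrow> real" where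
  "Pi_exp P X h = (\<Sum>Z\<in>sentences (length X). Pi_pmf P X Z * h Z)"

definition g_RS :: "('w \<Rightarrow> 'w set) \<Rightarrow> ('w list \<Rightarrow> 'y) \<Rightarrow> 'w list \<Rightarrow> 'y \<Rightarrow> real" where
  "g_RS P f X c = Pi_exp P X (\<lambda>Z. if f Z = c then 1 else 0)"

definition syn_set :: "('w \<Rightarrow> 'w set) \<Rightarrow> nat \<Rightarrow> 'w list \<Rightarrow> 'w list set" where
  "syn_set S R X = {X'. length X' = length X \<and>
      card {i. i < length X \<and> X' ! i \<noteq> X ! i} \<le> R \<and>
      (\<forall>i < length X. X' ! i \<in> S (X ! i))}"

definition unit_funs :: "('w list \<Rightarrow> real) set" where
  "unit_funs = {h. \<forall>Z. 0 \<le> h Z \<and> h Z \<le> 1}"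

definition g_low :: "('w \<Rightarrow> 'w set) \<Rightarrow> ('w \<Rightarrow> 'w set) \<Rightarrow> nat \<Rightarrow> ('w list \<Rightarrow> 'y) \<Rightarrow> 'w list \<Rightarrow> 'y \<Rightarrow> real" where
  "g_low S P R f X c = Inf {Pi_exp P X' h | h X'. h \<in> unit_funs \<and> X' \<in> syn_set S R X \<and>
                              Pi_exp P X h = g_RS P f X c}"

definition g_up :: "('w \<Rightarrow> 'w set) \<Rightarrow> ('w \<Rightarrow> 'w set) \<Rightarrow> nat \<Rightarrow> ('w list \<Rightarrow> 'y) \<Rightarrow> 'w list \<Rightarrow> 'y \<Rightarrow> real" where
  "g_up S P R f X c = Sup {Pi_exp P X' h | h X'. h \<in> unit_funs \<and> X' \<in> syn_set S R X \<and>
                              Pi_exp P X h = g_RS P f X c}"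

definition q_word :: "('w \<Rightarrow> 'w set) \<Rightarrow> ('w \<Rightarrow> 'w set) \<Rightarrow> 'w \<Rightarrow> real" where
  "q_word S P x = Min ((\<lambda>x'. real (card (P x \<inter> P x')) / real (card (P x))) ` S x)"

definition q_sent :: "('w \<Rightarrow> 'w set) \<Rightarrow> ('w \<Rightarrow> 'w set) \<Rightarrow> nat \<Rightarrow> 'w list \<Rightarrow> real" where
  "q_sent S P R X = 1 - prod_list (take R (sort (map (q_word S P) X)))"

end

theory Submission
  imports Defs "HOL-Library.FuncSet" "HOL-Library.Multiset"
begin

text \<open>If X' arises from X by synonym substitutions, the perturbation sets at every position
  have equal size, so the uniform product distributions of X and X' both dominate the common part
  \<open>Z \<mapsto> \<Prod>i. [Z!i \<in> P (X!i) \<inter> P (X'!i)] / |P (X!i)|\<close>, whose total mass is \<open>overlap P X X'\<close>.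
  Expectations of a [0,1]-valued function under the two distributions therefore differ by at most
  \<open>1 - overlap P X X'\<close>. The factors of the overlap equal 1 except at the at most R positions
  where X' differs from X, and there they are at least \<open>q_word S P (X!i) \<in> [0,1]\<close>; hence the
  overlap is at least the product of the R smallest of these values, i.e. \<open>1 - overlap P X X'\<close>
  is at most \<open>q_sent S P R X\<close>.\<close>

lemma sum_sentences_prod:
  fixes F :: "nat \<Rightarrow> 'w::finite \<Rightarrow> 'a::comm_semiring_1"
  shows "(\<Sum>Z\<in>sentences n. \<Prod>i<n. F i (Z!i)) = (\<Prod>i<n. \<Sum>z\<in>UNIV. F i z)"
proof -
  have "(\<Sum>Z\<in>sentences n. \<Prod>i<n. F i (Z!i)) = (\<Sum>g\<in>PiE {..<n} (\<lambda>_. UNIV). \<Prod>i<n. F i (g i))"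
    by (rule sum.reindex_bij_witness[of _ "\<lambda>g. map g [0..<n]" "\<lambda>Z. restrict (nth Z) {..<n}"])
       (auto simp: sentences_def PiE_def extensional_def intro: nth_equalityI)
  also have "\<dots> = (\<Prod>i<n. \<Sum>z\<in>UNIV. F i z)"
    by (rule prod_sum_PiE[symmetric]) auto
  finally show ?thesis .
qed

lemma sum_sentences_prod_indicator:
  fixes B :: "nat \<Rightarrow> 'w::finite set" and c :: "nat \<Rightarrow> real"
  shows "(\<Sum>Z\<in>sentences n. \<Prod>i<n. (if Z!i \<in> B i then 1 else 0) / c i)
       = (\<Prod>i<n. real (card (B i)) / c i)"
proof -
  have factor: "(\<Sum>z\<in>UNIV. (if z \<in> B i then 1 else 0) / c i) = real (card (B i)) / c i" for i
    by (simp add: sum_divide_distrib[symmetric] sum.If_cases)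
  show ?thesis by (subst sum_sentences_prod) (simp only: factor)
qed

lemma Pi_pmf_nonneg: "0 \<le> Pi_pmf P X Z"
  unfolding Pi_pmf_def by (intro prod_nonneg) auto

lemma sum_Pi_pmf:
  fixes P :: "'w::finite \<Rightarrow> 'w set"
  assumes "\<And>x. x \<in> set X \<Longrightarrow> P x \<noteq> {}"
  shows "(\<Sum>Z\<in>sentences (length X). Pi_pmf P X Z) = 1"
proof -
  have "card (P (X!i)) \<noteq> 0" if "i < length X" for i
    using assms[OF nth_mem[OF that]] by simp
  then show ?thesis
    unfolding Pi_pmf_def sum_sentences_prod_indicator by (intro prod.neutral) auto
qed

lemma Pi_exp_nonneg: "h \<in> unit_funs \<Longrightarrow> 0 \<le> Pi_exp P X h"
  unfolding Pi_exp_def unit_funs_def by (intro sum_nonneg mult_nonneg_nonneg Pi_pmf_nonneg) auto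

lemma Pi_exp_le_1:
  fixes P :: "'w::finite \<Rightarrow> 'w set"
  assumes "\<And>x. x \<in> set X \<Longrightarrow> P x \<noteq> {}" and "h \<in> unit_funs"
  shows "Pi_exp P X h \<le> 1"
proof -
  have "Pi_exp P X h \<le> (\<Sum>Z\<in>sentences (length X). Pi_pmf P X Z)"
    unfolding Pi_exp_def using \<open>h \<in> unit_funs\<close>
    by (intro sum_mono mult_left_le Pi_pmf_nonneg) (auto simp: unit_funs_def)
  then show ?thesis using sum_Pi_pmf[OF assms(1)] by simp
qed

lemma abs_sum_weighted_diff_le:
  fixes p q m h :: "'a \<Rightarrow> real"
  assumes m: "\<And>x. x \<in> A \<Longrightarrow> m x \<le> p x \<and> m x \<le> q x"
    and h: "\<And>x. x \<in> A \<Longrightarrow> 0 \<le> h x \<and> h x \<le> 1"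
    and pq: "sum p A = sum q A"
  shows "\<bar>(\<Sum>x\<in>A. p x * h x) - (\<Sum>x\<in>A. q x * h x)\<bar> \<le> sum p A - sum m A"
proof -
  have bounds: "0 \<le> (\<Sum>x\<in>A. (r x - m x) * h x) \<and> (\<Sum>x\<in>A. (r x - m x) * h x) \<le> sum r A - sum m A"
    if "\<And>x. x \<in> A \<Longrightarrow> m x \<le> r x" for r
  proof
    show "0 \<le> (\<Sum>x\<in>A. (r x - m x) * h x)"
      using that h by (intro sum_nonneg mult_nonneg_nonneg) auto
    have "(\<Sum>x\<in>A. (r x - m x) * h x) \<le> (\<Sum>x\<in>A. r x - m x)"
      using that h by (intro sum_mono mult_left_le) auto
    then show "(\<Sum>x\<in>A. (r x - m x) * h x) \<le> sum r A - sum m A"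
      by (simp add: sum_subtractf)
  qed
  have "(\<Sum>x\<in>A. p x * h x) - (\<Sum>x\<in>A. q x * h x)
      = (\<Sum>x\<in>A. (p x - m x) * h x) - (\<Sum>x\<in>A. (q x - m x) * h x)"
    by (simp add: sum_subtractf[symmetric] algebra_simps)
  then show ?thesis
    using bounds[of p] bounds[of q] m pq by (simp add: abs_le_iff)
qed

definition overlap :: "('w \<Rightarrow> 'w set) \<Rightarrow> 'w list \<Rightarrow> 'w list \<Rightarrow> real" where
  "overlap P X Y = (\<Prod>i<length X. real (card (P (X!i) \<inter> P (Y!i))) / real (card (P (X!i))))"

lemma abs_Pi_exp_diff_le_overlap:
  fixes P :: "'w::finite \<Rightarrow> 'w set"
  assumes len: "length Y = length X"
    and card: "\<And>i. i < length X \<Longrightarrow> card (P (Y!i)) = card (P (X!i))"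
    and ne: "\<And>x. x \<in> set X \<Longrightarrow> P x \<noteq> {}" "\<And>y. y \<in> set Y \<Longrightarrow> P y \<noteq> {}"
    and h: "h \<in> unit_funs"
  shows "\<bar>Pi_exp P X h - Pi_exp P Y h\<bar> \<le> 1 - overlap P X Y"
proof -
  define common where
    "common Z = (\<Prod>i<length X. (if Z!i \<in> P (X!i) \<inter> P (Y!i) then 1 else 0) / real (card (P (X!i))))"
    for Z
  have "common Z \<le> Pi_pmf P X Z \<and> common Z \<le> Pi_pmf P Y Z" for Z
    unfolding common_def Pi_pmf_def len
    by (intro conjI prod_mono) (auto simp: divide_right_mono card)
  moreover have "(\<Sum>Z\<in>sentences (length X). common Z) = overlap P X Y"
    unfolding common_def overlap_def sum_sentences_prod_indicator ..
  moreover have "(\<Sum>Z\<in>sentences (length X). Pi_pmf P X Z) = 1"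
    and "(\<Sum>Z\<in>sentences (length X). Pi_pmf P Y Z) = 1"
    using sum_Pi_pmf[of X P] sum_Pi_pmf[of Y P] ne len by simp_all
  ultimately show ?thesis
    using abs_sum_weighted_diff_le[of "sentences (length X)" common "Pi_pmf P X" "Pi_pmf P Y" h] h
    unfolding Pi_exp_def len by (simp add: unit_funs_def)
qed

lemma prod_list_take_Cons_le:
  fixes a :: "'a::linordered_idom"
  assumes "sorted (a # s)" and "\<forall>x\<in>set (a # s). 0 \<le> x \<and> x \<le> 1"
  shows "prod_list (take R (a # s)) \<le> prod_list (take R s)"
proof (cases R)
  case (Suc R')
  have nonneg: "0 \<le> prod_list (take R' s)"
    using assms(2) by (intro prod_list_nonneg) (auto dest: in_set_takeD)
  show ?thesis
  proof (cases "R' < length s")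
    case True
    then have "a \<le> s ! R'" using assms(1) by (simp add: nth_mem)
    then show ?thesis
      using True nonneg Suc by (simp add: take_Suc_conv_app_nth mult_right_mono mult.commute)
  next
    case False
    then show ?thesis using nonneg assms(2) Suc by (simp add: mult_left_le_one_le)
  qed
qed simp

lemma prod_list_take_sorted_le_prod_mset:
  fixes s :: "'a::linordered_idom list"
  assumes "sorted s" and "\<forall>x\<in>set s. 0 \<le> x \<and> x \<le> 1" and "M \<subseteq># mset s" and "size M \<le> R"
  shows "prod_list (take R s) \<le> prod_mset M"
  using assms
proof (induction s arbitrary: M R)
  case (Cons a s)
  show ?case
  proof (cases "a \<in># M")
    case True
    then obtain M' where M: "M = add_mset a M'" by (meson multi_member_split)
    with Cons.prems obtain R' where R: "R = Suc R'" and "size M' \<le> R'"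
      by (cases R) auto
    with Cons M have "prod_list (take R' s) \<le> prod_mset M'" by simp
    then show ?thesis using Cons.prems(2) M R by (simp add: mult_left_mono)
  next
    case False
    with Cons.prems(3) have "M \<subseteq># mset s"
      by (simp add: inter_add_left1 subset_mset.inf.absorb_iff2)
    then have "prod_list (take R s) \<le> prod_mset M"
      using Cons by simp
    then show ?thesis by (rule order_trans[OF prod_list_take_Cons_le[OF Cons.prems(1,2)]])
  qed
qed simp

lemma prod_list_take_sort_le_prod:
  fixes qs :: "'a::linordered_idom list"
  assumes D: "D \<subseteq> {..<length qs}" and "card D \<le> R"
    and "\<forall>x\<in>set qs. 0 \<le> x \<and> x \<le> 1"
  shows "prod_list (take R (sort qs)) \<le> (\<Prod>i\<in>D. qs ! i)"
proof -
  have "mset_set D \<subseteq># mset_set {..<length qs}"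
    using D by (intro subset_imp_msubset_mset_set) auto
  then have "image_mset (nth qs) (mset_set D) \<subseteq># mset (sort qs)"
    by (metis image_mset_subseteq_mono map_nth mset_map mset_set_upto_eq_mset_upto mset_sort)
  then have "prod_list (take R (sort qs)) \<le> prod_mset (image_mset (nth qs) (mset_set D))"
    using assms by (intro prod_list_take_sorted_le_prod_mset) auto
  then show ?thesis by (simp add: prod_unfold_prod_mset)
qed

lemma q_word_le:
  fixes S P :: "'w::finite \<Rightarrow> 'w set"
  assumes "x' \<in> S x"
  shows "q_word S P x \<le> real (card (P x \<inter> P x')) / real (card (P x))"
  unfolding q_word_def using assms by (intro Min_le) auto

lemma q_word_nonneg:
  fixes S P :: "'w::finite \<Rightarrow> 'w set"
  assumes "S x \<noteq> {}"
  shows "0 \<le> q_word S P x"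
  unfolding q_word_def using assms by (subst Min_ge_iff) auto

lemma q_word_le_1:
  fixes S P :: "'w::finite \<Rightarrow> 'w set"
  assumes "x \<in> S x"
  shows "q_word S P x \<le> 1"
  using q_word_le[of x S x P] assms by (cases "card (P x) = 0") simp_all

lemma one_minus_overlap_le_q_sent:
  fixes S P :: "'w::finite \<Rightarrow> 'w set"
  assumes refl: "\<And>x. x \<in> S x" and ne: "\<And>x. x \<in> set X \<Longrightarrow> P x \<noteq> {}"
    and X': "X' \<in> syn_set S R X"
  shows "1 - overlap P X X' \<le> q_sent S P R X"
proof -
  define D where "D = {i. i < length X \<and> X' ! i \<noteq> X ! i}"
  define r where "r i = real (card (P (X!i) \<inter> P (X'!i))) / real (card (P (X!i)))" for i
  have "card D \<le> R" and syn: "\<And>i. i < length X \<Longrightarrow> X' ! i \<in> S (X ! i)"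
    using X' by (auto simp: syn_set_def D_def)
  have D: "D \<subseteq> {..<length X}" by (auto simp: D_def)
  have "prod_list (take R (sort (map (q_word S P) X))) \<le> (\<Prod>i\<in>D. map (q_word S P) X ! i)"
    using D \<open>card D \<le> R\<close>
    by (intro prod_list_take_sort_le_prod) (auto intro: q_word_nonneg q_word_le_1 refl)
  also have "\<dots> \<le> (\<Prod>i\<in>D. r i)"
    unfolding r_def using D syn refl
    by (intro prod_mono) (auto simp: D_def intro: q_word_nonneg q_word_le)
  also have "\<dots> = overlap P X X'"
    unfolding overlap_def r_def[symmetric] using D ne
    by (intro prod.mono_neutral_left) (auto simp: D_def r_def card_gt_0_iff)
  finally show ?thesis unfolding q_sent_def by simp
qed

lemma abs_Pi_exp_syn_set_le_q_sent:
  fixes S P :: "'w::finite \<Rightarrow> 'w set"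
  assumes refl: "\<And>x. x \<in> S x" and ne: "\<And>x. P x \<noteq> {}"
    and card: "\<And>x x'. x' \<in> S x \<Longrightarrow> card (P x) = card (P x')"
    and X': "X' \<in> syn_set S R X" and h: "h \<in> unit_funs"
  shows "\<bar>Pi_exp P X h - Pi_exp P X' h\<bar> \<le> q_sent S P R X"
proof -
  have "length X' = length X" and "\<And>i. i < length X \<Longrightarrow> card (P (X'!i)) = card (P (X!i))"
    using X' card by (auto simp: syn_set_def)
  then have "\<bar>Pi_exp P X h - Pi_exp P X' h\<bar> \<le> 1 - overlap P X X'"
    using ne h by (intro abs_Pi_exp_diff_le_overlap) auto
  also have "\<dots> \<le> q_sent S P R X"
    using refl ne X' by (rule one_minus_overlap_le_q_sent)
  finally show ?thesis .
qed

theorem theorem3: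
  fixes S P :: "'w::finite \<Rightarrow> 'w set"
    and f :: "'w list \<Rightarrow> 'y::finite"
    and L R :: nat and X :: "'w list" and c :: 'y
  assumes syn_refl: "\<And>x. x \<in> S x"
    and syn_sym: "\<And>x y. y \<in> S x \<longleftrightarrow> x \<in> S y"
    and P_ne: "\<And>x. P x \<noteq> {}"
    and P_card: "\<And>x x'. x' \<in> S x \<Longrightarrow> card (P x) = card (P x')"
    and L: "L \<ge> 1" and R: "R \<le> L"
    and X: "X \<in> sentences L"
  shows "g_low S P R f X c \<ge> max (g_RS P f X c - q_sent S P R X) 0
       \<and> g_up S P R f X c \<le> min (g_RS P f X c + q_sent S P R X) 1"
proof -
  let ?g = "g_RS P f X c" and ?q = "q_sent S P R X"
  define A where "A = {Pi_exp P X' h | h X'. h \<in> unit_funs \<and> X' \<in> syn_set S R X \<and>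
                              Pi_exp P X h = ?g}"
  have "(\<lambda>Z. if f Z = c then 1 else 0) \<in> unit_funs" and "X \<in> syn_set S R X"
    by (simp_all add: unit_funs_def syn_set_def syn_refl)
  then have "A \<noteq> {}"
    unfolding A_def g_RS_def by blast
  moreover have "max (?g - ?q) 0 \<le> a \<and> a \<le> min (?g + ?q) 1" if "a \<in> A" for a
    using that abs_Pi_exp_syn_set_le_q_sent[OF syn_refl P_ne P_card]
      Pi_exp_nonneg Pi_exp_le_1[of _ P] P_ne
    unfolding A_def by (fastforce simp: abs_le_iff)
  ultimately have "max (?g - ?q) 0 \<le> Inf A" and "Sup A \<le> min (?g + ?q) 1"
    by (meson cInf_greatest cSup_least)+
  then show ?thesis
    unfolding g_low_def g_up_def A_def by simp
qed

end
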